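(* Let $\Theta$ be a non-empty finite set and let $\mathcal{S}$ be a measurable subset of $\Delta(\Theta)$. Let $\pi,\pi'\in\Delta(\mathcal{S})$ be two populations with the same skill distribution, i.e. $p_\pi=p_{\pi'}$. Then: (a) There is systematic discrimination against $\pi$ if and only if $\pi' \mathrel{M} \pi$ and $\pi\neq\pi'$. (b) There is unsystematic discrimination if and only if neither $\pi \mathrel{M} \pi'$ nor $\pi' \mathrel{M} \pi$ holds. (c) There is no discrimination if and only if $\pi=\pi'$.
   Context: $\Delta(\Theta)$ denotes the set of probability distributions on $\Theta$ (a simplex in $\mathbb{R}^\Theta$, with its Borel $\sigma$-algebra); elements $s\in\Delta(\Theta)$ are called traits. A population is a probability measure $\pi\in\Delta(\mathcal{S})$ on $\mathcal{S}$. Its skill distribution is $p_\pi\in\Delta(\Theta)$, $p_\pi(\theta)=\int_{\mathcal{S}} s(\theta)\,\pi(\mathrm{d}s)$. A firm is a non-empty finite set $A\subset\mathbb{R}^\Theta$, and $v_A(s)=\max_{a\in A}\sum_{\theta\in\Theta}a(\theta)s(\theta)$ for $s\in\Delta(\Theta)$. For populations $\pi,\pi'$ with $p_\pi=p_{\pi'}$: firm $A$ discriminates against $\pi$ if $\int_{\mathcal{S}} v_A\,\mathrm{d}\pi\le\int_{\mathcal{S}} v_A\,\mathrm{d}\pi'$, and discriminates strictly against $\pi$ if the inequality is strict. There is systematic discrimination against $\pi$ if every firm discriminates against $\pi$ and some firm discriminates strictly against $\pi$. There is unsystematic discrimination if there are firms $A,A'$ such that $A$ discriminates strictly against $\pi$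 and $A'$ discriminates strictly against $\pi'$. There is no discrimination if there is neither systematic discrimination (against $\pi$ or against $\pi'$) nor unsystematic discrimination. $\pi' \mathrel{M} \pi$ ($\pi'$ is a mean-preserving spread of $\pi$) means $\int_{\mathcal{S}} h\,\mathrm{d}\pi'\ge\int_{\mathcal{S}} h\,\mathrm{d}\pi$ for every convex continuous function $h:\Delta(\Theta)\to\mathbb{R}$. *)

theory Defs
  imports "HOL-Probability.Probability"
begin

text \<open>Theta is a finite type 'a (hence non-empty). Traits are vectors in real^'a
lying in the probability simplex.\<close>

definition traits :: "(real ^ 'a::finite) set" where
  "traits = {s. (\<forall>\<theta>. 0 \<le> s $ \<theta>) \<and> (\<Sum>\<theta>\<in>UNIV. s $ \<theta>) = 1}"

definition population :: "(real ^ 'a::finite) set \<Rightarrow> (real ^ 'a) measure \<Rightarrow> bool" where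
  "population S \<pi> \<longleftrightarrow> sets \<pi> = sets (restrict_space borel S) \<and> prob_space \<pi>"

definition skill_dist :: "(real ^ 'a::finite) measure \<Rightarrow> real ^ 'a" where
  "skill_dist \<pi> = (\<chi> \<theta>. \<integral>s. s $ \<theta> \<partial>\<pi>)"

definition firm :: "(real ^ 'a::finite) set \<Rightarrow> bool" where
  "firm A \<longleftrightarrow> finite A \<and> A \<noteq> {}"

definition vA :: "(real ^ 'a::finite) set \<Rightarrow> real ^ 'a \<Rightarrow> real" where
  "vA A s = Max ((\<lambda>a. \<Sum>\<theta>\<in>UNIV. a $ \<theta> * s $ \<theta>) ` A)"

definition discriminates_against ::
  "(real ^ 'a::finite) set \<Rightarrow> (real ^ 'a) measure \<Rightarrow> (real ^ 'a) measure \<Rightarrow> bool" where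
  "discriminates_against A \<pi> \<pi>' \<longleftrightarrow> (\<integral>s. vA A s \<partial>\<pi>) \<le> (\<integral>s. vA A s \<partial>\<pi>')"

definition discriminates_strictly_against ::
  "(real ^ 'a::finite) set \<Rightarrow> (real ^ 'a) measure \<Rightarrow> (real ^ 'a) measure \<Rightarrow> bool" where
  "discriminates_strictly_against A \<pi> \<pi>' \<longleftrightarrow> (\<integral>s. vA A s \<partial>\<pi>) < (\<integral>s. vA A s \<partial>\<pi>')"

definition systematic_discrimination ::
  "(real ^ 'a::finite) measure \<Rightarrow> (real ^ 'a) measure \<Rightarrow> bool" where
  "systematic_discrimination \<pi> \<pi>' \<longleftrightarrow>
     (\<forall>A. firm A \<longrightarrow> discriminates_against A \<pi> \<pi>') \<and>
     (\<exists>A. firm A \<and> discriminates_strictly_against A \<pi> \<pi>')"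

definition unsystematic_discrimination ::
  "(real ^ 'a::finite) measure \<Rightarrow> (real ^ 'a) measure \<Rightarrow> bool" where
  "unsystematic_discrimination \<pi> \<pi>' \<longleftrightarrow>
     (\<exists>A A'. firm A \<and> firm A' \<and> discriminates_strictly_against A \<pi> \<pi>' \<and>
             discriminates_strictly_against A' \<pi>' \<pi>)"

definition no_discrimination ::
  "(real ^ 'a::finite) measure \<Rightarrow> (real ^ 'a) measure \<Rightarrow> bool" where
  "no_discrimination \<pi> \<pi>' \<longleftrightarrow>
     \<not> systematic_discrimination \<pi> \<pi>' \<and> \<not> systematic_discrimination \<pi>' \<pi> \<and>
     \<not> unsystematic_discrimination \<pi> \<pi>'"

text \<open>mps \<pi>' \<pi>: \<pi>' is a mean-preserving spread of \<pi> (\<pi>' M \<pi>).\<close>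
definition mps :: "(real ^ 'a::finite) measure \<Rightarrow> (real ^ 'a) measure \<Rightarrow> bool" where
  "mps \<pi>' \<pi> \<longleftrightarrow>
     (\<forall>h :: real ^ 'a \<Rightarrow> real. convex_on traits h \<and> continuous_on traits h \<longrightarrow>
        (\<integral>s. h s \<partial>\<pi>') \<ge> (\<integral>s. h s \<partial>\<pi>))"

end

theory Submission
  imports Defs
begin

text \<open>
  Every firm's value function vA A is a maximum of finitely many linear functions, hence convex
  and continuous. Conversely, a convex continuous function h on the simplex is the supremum of its
  affine minorants (separating points below the epigraph); by compactness finitely many of them
  come within e of h everywhere, and on the simplex an affine function w x + c is the linear
  function (w + c (1, ..., 1)) x. So vA A approximates h uniformly from below, and "every firm
  discriminates against pi" says exactly that pi' is a mean-preserving spread of pi.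

  Mean-preserving spreads are antisymmetric: if all convex continuous functions have equal
  integrals, so do the ramps max 0 (1 - n d_b), where d_b x is the l1 excess of x over b. These
  are differences of convex functions and converge to the indicator of the orthant {..b}, and
  orthants generate the Borel sets. The three parts then follow by propositional reasoning.
\<close>

lemma traits_convex: "convex traits"
proof (rule convexI)
  fix x y :: "real^'a" and u v :: real
  assume "x \<in> traits" "y \<in> traits" "0 \<le> u" "0 \<le> v" "u + v = 1"
  then show "u *\<^sub>R x + v *\<^sub>R y \<in> traits"
    unfolding traits_def by (auto simp add: sum.distrib simp flip: sum_distrib_left)
qed

lemma traits_closed: "closed traits"
  unfolding traits_def Collect_conj_eq
  by (intro closed_Int closed_Collect_all closed_Collect_le closed_Collect_eq continuous_intros)

lemma traits_component_le_1:
  assumes "s \<in> traits" shows "s $ \<theta> \<le> 1"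
proof -
  have "s $ \<theta> \<le> (\<Sum>j\<in>UNIV. s $ j)"
    using assms unfolding traits_def by (intro member_le_sum) auto
  with assms show ?thesis unfolding traits_def by simp
qed

lemma traits_compact: "compact traits"
proof -
  have "traits \<subseteq> cbox 0 (\<chi> \<theta>. 1)"
    by (auto simp: mem_box_cart traits_component_le_1) (simp add: traits_def)
  then show ?thesis
    using bounded_cbox bounded_subset traits_closed compact_eq_bounded_closed by blast
qed

lemma traits_nonempty: "traits \<noteq> {}"
proof -
  have "axis \<theta> 1 \<in> traits" for \<theta> :: 'a
    by (simp add: traits_def axis_def)
  then show ?thesis by blast
qed

lemma inner_one_traits: "s \<in> traits \<Longrightarrow> (\<chi> \<theta>. 1) \<bullet> s = 1"
  unfolding traits_def inner_vec_def by simp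

lemma convex_on_max:
  assumes "convex_on S f" "convex_on S g"
  shows "convex_on S (\<lambda>x. max (f x) (g x))"
proof -
  have "max (f (u *\<^sub>R x + v *\<^sub>R y)) (g (u *\<^sub>R x + v *\<^sub>R y))
          \<le> u * max (f x) (g x) + v * max (f y) (g y)"
    if "x \<in> S" "y \<in> S" "0 \<le> u" "0 \<le> v" "u + v = 1" for x y u v
  proof -
    have "u * f x + v * f y \<le> u * max (f x) (g x) + v * max (f y) (g y)"
         "u * g x + v * g y \<le> u * max (f x) (g x) + v * max (f y) (g y)"
      using that by (intro add_mono mult_left_mono; simp)+
    moreover have "f (u *\<^sub>R x + v *\<^sub>R y) \<le> u * f x + v * f y"
         "g (u *\<^sub>R x + v *\<^sub>R y) \<le> u * g x + v * g y"
      using assms that unfolding convex_on_def by blast+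
    ultimately show ?thesis by linarith
  qed
  with assms show ?thesis unfolding convex_on_def by blast
qed

lemma convex_on_inner: "convex S \<Longrightarrow> convex_on S (\<lambda>x. a \<bullet> x)"
  by (rule convex_onI) (auto simp: inner_add_right)

lemma convex_on_sum_functions:
  assumes "finite I" "convex S" "\<And>i. i \<in> I \<Longrightarrow> convex_on S (f i)"
  shows "convex_on S (\<lambda>x. \<Sum>i\<in>I. f i x)"
  using assms(1,3)
proof (induction I rule: finite_induct)
  case empty
  then show ?case by (simp add: convex_on_const assms(2))
next
  case (insert i I)
  then show ?case by (simp add: convex_on_add)
qed

lemma closed_epigraph:
  assumes "closed S" "continuous_on S f"
  shows "closed (epigraph S f)"
proof -
  have "continuous_on (S \<times> UNIV) (\<lambda>p. f (fst p) - snd p)"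
    by (intro continuous_intros continuous_on_compose2[OF assms(2)]) auto
  moreover have "epigraph S f = (S \<times> UNIV) \<inter> (\<lambda>p. f (fst p) - snd p) -` {..0}"
    by (auto simp: epigraph_def)
  ultimately show ?thesis
    using assms(1) by (metis closed_Times closed_UNIV closed_atMost continuous_closed_preimage)
qed

lemma convex_on_affine_minorant:
  fixes h :: "'a::euclidean_space \<Rightarrow> real"
  assumes "convex_on S h" "continuous_on S h" "closed S" "x0 \<in> S" "e > 0"
  obtains w c where "\<And>x. x \<in> S \<Longrightarrow> w \<bullet> x + c < h x" "h x0 - e < w \<bullet> x0 + c"
proof -
  have "(x0, h x0 - e) \<notin> epigraph S h"
    using \<open>e > 0\<close> by (simp add: mem_epigraph)
  then obtain u \<alpha> b where sep: "u \<bullet> x0 + \<alpha> * (h x0 - e) < b"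
      "\<And>x y. (x, y) \<in> epigraph S h \<Longrightarrow> u \<bullet> x + \<alpha> * y > b"
    using separating_hyperplane_closed_point[OF convex_epigraphI[OF assms(1)]
        closed_epigraph[OF assms(3,2)]]
    by (force simp: inner_Pair)
  have graph: "u \<bullet> x + \<alpha> * h x > b" if "x \<in> S" for x
    using sep(2) that by (simp add: mem_epigraph)
  \<comment> \<open>the hyperplane is not vertical, as it separates (x0, h x0 - e) from (x0, h x0)\<close>
  have "\<alpha> > 0"
    using sep(1) graph[OF \<open>x0 \<in> S\<close>] \<open>e > 0\<close>
    by (smt (verit, best) mult_le_0_iff right_diff_distrib)
  show ?thesis
  proof
    show "(- u /\<^sub>R \<alpha>) \<bullet> x + b / \<alpha> < h x" if "x \<in> S" for x
      using graph[OF that] \<open>\<alpha> > 0\<close> by (simp add: field_simps)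
    show "h x0 - e < (- u /\<^sub>R \<alpha>) \<bullet> x0 + b / \<alpha>"
      using sep(1) \<open>\<alpha> > 0\<close> by (simp add: field_simps)
  qed
qed

lemma convex_on_Max_affine_approx:
  fixes h :: "'a::euclidean_space \<Rightarrow> real"
  assumes "convex_on S h" "continuous_on S h" "compact S" "S \<noteq> {}" "e > 0"
  obtains C :: "('a \<times> real) set" where "finite C" "C \<noteq> {}"
    "\<And>x. x \<in> S \<Longrightarrow> h x - e < Max ((\<lambda>(w, c). w \<bullet> x + c) ` C)"
    "\<And>x. x \<in> S \<Longrightarrow> Max ((\<lambda>(w, c). w \<bullet> x + c) ` C) \<le> h x"
proof -
  define aff where "aff p x = fst p \<bullet> x + snd p" for p :: "'a \<times> real" and x
  have "\<forall>x0\<in>S. \<exists>p. (\<forall>x\<in>S. aff p x < h x) \<and> h x0 - e < aff p x0"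
    using convex_on_affine_minorant[OF assms(1,2) compact_imp_closed[OF assms(3)] _ assms(5)]
    unfolding aff_def by (metis fst_conv snd_conv)
  then obtain P where P: "\<And>x0 x. x0 \<in> S \<Longrightarrow> x \<in> S \<Longrightarrow> aff (P x0) x < h x"
      "\<And>x0. x0 \<in> S \<Longrightarrow> h x0 - e < aff (P x0) x0"
    by metis
  \<comment> \<open>each minorant stays within e of h on a relatively open neighbourhood of its contact point\<close>
  have "\<exists>V. open V \<and> V \<inter> S = (\<lambda>x. aff (P x0) x - h x) -` {-e<..} \<inter> S" for x0
    unfolding aff_def
    by (intro continuous_on_open_invariant[THEN iffD1, rule_format] continuous_intros assms(2))
  then obtain V where V: "\<And>x0. open (V x0)"
      "\<And>x0. V x0 \<inter> S = (\<lambda>x. aff (P x0) x - h x) -` {-e<..} \<inter> S"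
    by metis
  have "S \<subseteq> (\<Union>x0\<in>S. V x0)"
    using V(2) P(2) by fastforce
  then obtain X where X: "X \<subseteq> S" "finite X" "S \<subseteq> (\<Union>x0\<in>X. V x0)"
    by (rule compactE_image[OF assms(3) V(1)]) blast
  show ?thesis
  proof
    show "finite (P ` X)" "P ` X \<noteq> {}"
      using X assms(4) by auto
    fix x assume "x \<in> S"
    have fin: "finite ((\<lambda>(w, c). w \<bullet> x + c) ` P ` X)" "(\<lambda>(w, c). w \<bullet> x + c) ` P ` X \<noteq> {}"
      using X assms(4) by auto
    show "Max ((\<lambda>(w, c). w \<bullet> x + c) ` P ` X) \<le> h x"
      using P(1) X(1) \<open>x \<in> S\<close> fin by (auto simp: aff_def case_prod_unfold less_imp_le)
    obtain x0 where "x0 \<in> X" "x \<in> V x0"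
      using X(3) \<open>x \<in> S\<close> by blast
    then have "x \<in> (\<lambda>x. aff (P x0) x - h x) -` {-e<..}"
      using V(2)[of x0] \<open>x \<in> S\<close> by (metis IntD1 IntI)
    then have "h x - e < aff (P x0) x"
      by simp
    also have "\<dots> \<le> Max ((\<lambda>(w, c). w \<bullet> x + c) ` P ` X)"
      using fin \<open>x0 \<in> X\<close> by (intro Max_ge) (auto simp: aff_def case_prod_unfold)
    finally show "h x - e < Max ((\<lambda>(w, c). w \<bullet> x + c) ` P ` X)" .
  qed
qed

lemma vA_eq_Max_inner: "vA A s = Max ((\<lambda>a. a \<bullet> s) ` A)"
  by (simp add: vA_def inner_vec_def)

lemma vA_singleton: "vA {a} = (\<lambda>s. a \<bullet> s)"
  by (simp add: vA_eq_Max_inner fun_eq_iff)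

lemma vA_insert: "finite A \<Longrightarrow> A \<noteq> {} \<Longrightarrow> vA (insert a A) = (\<lambda>s. max (a \<bullet> s) (vA A s))"
  by (simp add: vA_eq_Max_inner fun_eq_iff)

lemma convex_on_vA:
  assumes "firm A"
  shows "convex_on UNIV (vA A)"
proof -
  have "finite A" "A \<noteq> {}"
    using assms by (auto simp: firm_def)
  then show ?thesis
    by (induction A rule: finite_ne_induct)
      (simp_all add: vA_singleton vA_insert convex_on_max convex_on_inner)
qed

lemma continuous_on_vA:
  assumes "firm A"
  shows "continuous_on UNIV (vA A)"
proof -
  have "finite A" "A \<noteq> {}"
    using assms by (auto simp: firm_def)
  then show ?thesis
    by (induction A rule: finite_ne_induct)
      (simp_all add: vA_singleton vA_insert continuous_intros)
qed

lemma convex_on_approx_by_vA: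
  assumes "convex_on traits h" "continuous_on traits h" "e > 0"
  obtains A where "firm A"
    "\<And>s. s \<in> traits \<Longrightarrow> h s - e < vA A s" "\<And>s. s \<in> traits \<Longrightarrow> vA A s \<le> h s"
proof -
  obtain C where C: "finite C" "C \<noteq> {}"
    "\<And>s. s \<in> traits \<Longrightarrow> h s - e < Max ((\<lambda>(w, c). w \<bullet> s + c) ` C)"
    "\<And>s. s \<in> traits \<Longrightarrow> Max ((\<lambda>(w, c). w \<bullet> s + c) ` C) \<le> h s"
    using convex_on_Max_affine_approx[OF assms(1,2) traits_compact traits_nonempty assms(3)]
    by blast
  define A where "A = (\<lambda>(w, c). w + c *\<^sub>R (\<chi> \<theta>. 1)) ` C"
  have "vA A s = Max ((\<lambda>(w, c). w \<bullet> s + c) ` C)" if "s \<in> traits" for s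
    unfolding vA_eq_Max_inner A_def image_image
    by (intro arg_cong[where f = Max] image_cong)
      (auto simp: inner_add_left inner_one_traits[OF that])
  moreover have "firm A"
    using C(1,2) by (simp add: firm_def A_def)
  ultimately show thesis
    using that C(3,4) by simp
qed

lemma space_population: "population S \<pi> \<Longrightarrow> space \<pi> = S"
  unfolding population_def
  by (metis sets_eq_imp_space_eq space_borel sets.top Int_UNIV_right space_restrict_space)

lemma sets_population: "population S \<pi> \<Longrightarrow> sets \<pi> = (\<inter>) S ` sets borel"
  unfolding population_def by (simp add: sets_restrict_space)

lemma measurable_population_continuous:
  assumes "population S \<pi>" "continuous_on S g"
  shows "g \<in> borel_measurable \<pi>"
  using borel_measurable_continuous_on_restrict[OF assms(2)] assms(1)
  unfolding population_def by (metis measurable_cong_sets)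

lemma integrable_population_continuous:
  fixes g :: "real ^ 'a \<Rightarrow> real"
  assumes "population S \<pi>" "S \<subseteq> K" "compact K" "continuous_on K g"
  shows "integrable \<pi> g"
proof -
  interpret prob_space \<pi>
    using assms(1) by (simp add: population_def)
  obtain B where "\<And>x. x \<in> K \<Longrightarrow> norm (g x) \<le> B"
    using compact_imp_bounded[OF compact_continuous_image[OF assms(4,3)]]
    by (auto simp: bounded_iff)
  then have "AE x in \<pi>. norm (g x) \<le> B"
    using assms(2) space_population[OF assms(1)] by (intro AE_I2) auto
  moreover have "g \<in> borel_measurable \<pi>"
    using measurable_population_continuous[OF assms(1) continuous_on_subset[OF assms(4,2)]] .
  ultimately show ?thesis
    by (rule integrable_const_bound)
qed

lemma integral_population_mono:
  fixes f g :: "real ^ 'a \<Rightarrow> real"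
  assumes "population S \<pi>" "S \<subseteq> K" "compact K" "continuous_on K f" "continuous_on K g"
    and "\<And>s. s \<in> K \<Longrightarrow> f s \<le> g s"
  shows "(\<integral>s. f s \<partial>\<pi>) \<le> (\<integral>s. g s \<partial>\<pi>)"
  using assms space_population[OF assms(1)]
  by (intro integral_mono integrable_population_continuous[OF assms(1-3)]) auto

lemma mps_iff_all_firms_discriminate:
  assumes "population S \<pi>" "population S \<pi>'" "S \<subseteq> traits"
  shows "mps \<pi>' \<pi> \<longleftrightarrow> (\<forall>A. firm A \<longrightarrow> discriminates_against A \<pi> \<pi>')"
proof
  assume "mps \<pi>' \<pi>"
  then show "\<forall>A. firm A \<longrightarrow> discriminates_against A \<pi> \<pi>'"
    unfolding mps_def discriminates_against_def
    by (metis convex_on_vA continuous_on_vA convex_on_subset continuous_on_subset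
        subset_UNIV traits_convex)
next
  assume firms: "\<forall>A. firm A \<longrightarrow> discriminates_against A \<pi> \<pi>'"
  show "mps \<pi>' \<pi>"
    unfolding mps_def
  proof (intro allI impI, elim conjE)
    fix h :: "real ^ 'a \<Rightarrow> real"
    assume h: "convex_on traits h" "continuous_on traits h"
    show "(\<integral>s. h s \<partial>\<pi>) \<le> (\<integral>s. h s \<partial>\<pi>')"
    proof (rule field_le_epsilon)
      fix e :: real
      assume "e > 0"
      then obtain A where A: "firm A" "\<And>s. s \<in> traits \<Longrightarrow> h s - e < vA A s"
          "\<And>s. s \<in> traits \<Longrightarrow> vA A s \<le> h s"
        using convex_on_approx_by_vA[OF h] by blast
      have vA_cont: "continuous_on traits (vA A)"
        using continuous_on_vA[OF A(1)] continuous_on_subset by blast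
      interpret prob_space \<pi>
        using assms(1) by (simp add: population_def)
      have "(\<integral>s. h s \<partial>\<pi>) \<le> (\<integral>s. vA A s + e \<partial>\<pi>)"
        using A(2) by (intro integral_population_mono[OF assms(1,3) traits_compact]
            h(2) vA_cont continuous_intros) (fastforce simp: less_imp_le)
      also have "\<dots> = (\<integral>s. vA A s \<partial>\<pi>) + e"
        using integrable_population_continuous[OF assms(1,3) traits_compact vA_cont]
        by (simp add: prob_space)
      also have "\<dots> \<le> (\<integral>s. vA A s \<partial>\<pi>') + e"
        using firms A(1) by (simp add: discriminates_against_def)
      also have "(\<integral>s. vA A s \<partial>\<pi>') \<le> (\<integral>s. h s \<partial>\<pi>')"
        using A(3) by (intro integral_population_mono[OF assms(2,3) traits_compact] h(2) vA_cont)
      finally show "(\<integral>s. h s \<partial>\<pi>) \<le> (\<integral>s. h s \<partial>\<pi>') + e"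
        by simp
    qed
  qed
qed

definition orthant_excess :: "real ^ 'n \<Rightarrow> real ^ 'n \<Rightarrow> real" where
  "orthant_excess b x = (\<Sum>j\<in>UNIV. max 0 (x $ j - b $ j))"

lemma orthant_excess_nonneg: "0 \<le> orthant_excess b x"
  unfolding orthant_excess_def by (intro sum_nonneg) simp

lemma orthant_excess_eq_0_iff: "orthant_excess b x = 0 \<longleftrightarrow> x \<le> b"
proof -
  have "orthant_excess b x = 0 \<longleftrightarrow> (\<forall>j. max 0 (x $ j - b $ j) = 0)"
    unfolding orthant_excess_def by (simp add: sum_nonneg_eq_0_iff)
  also have "\<dots> \<longleftrightarrow> x \<le> b"
    by (simp add: less_eq_vec_def max_def) (metis nle_le order.antisym)
  finally show ?thesis .
qed

lemma convex_on_orthant_excess: "convex_on UNIV (orthant_excess b)"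
proof -
  have "convex_on UNIV (\<lambda>x. max 0 (x $ j - b $ j))" for j
    by (intro convex_on_max convex_onI) (simp_all add: algebra_simps)
  then show ?thesis
    unfolding orthant_excess_def by (intro convex_on_sum_functions) auto
qed

lemma continuous_on_orthant_excess [continuous_intros]: "continuous_on T (orthant_excess b)"
  unfolding orthant_excess_def by (intro continuous_intros)

lemma tendsto_orthant_ramp:
  "(\<lambda>n. max 0 (1 - real n * orthant_excess b x)) \<longlonglongrightarrow> indicator {..b} x"
proof (cases "x \<le> b")
  case True
  then have "orthant_excess b x = 0"
    by (simp add: orthant_excess_eq_0_iff)
  with True show ?thesis
    by simp
next
  case False
  then have "orthant_excess b x > 0"
    using orthant_excess_nonneg orthant_excess_eq_0_iff by (metis order_le_less)
  then have "filterlim (\<lambda>n. real n * orthant_excess b x) at_top sequentially"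
    using filterlim_real_sequentially by (rule filterlim_at_top_mult_tendsto_pos[OF tendsto_const])
  then have "\<forall>\<^sub>F n in sequentially. 1 < real n * orthant_excess b x"
    by (simp add: filterlim_at_top_dense)
  then have "\<forall>\<^sub>F n in sequentially. max 0 (1 - real n * orthant_excess b x) = indicator {..b} x"
    by eventually_elim (use False in simp)
  then show ?thesis
    by (rule tendsto_eventually)
qed

lemma tendsto_integral_orthant_ramp:
  assumes "population S M"
  shows "(\<lambda>n. \<integral>x. max 0 (1 - real n * orthant_excess b x) \<partial>M)
           \<longlonglongrightarrow> measure M ({..b} \<inter> S)"
proof -
  interpret prob_space M
    using assms by (simp add: population_def)
  have "{..b} \<inter> S \<in> sets M"
    using sets_population[OF assms] by (auto intro!: image_eqI[of _ _ "{..b}"])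
  then have "(indicator {..b} :: real ^ 'a \<Rightarrow> real) \<in> borel_measurable M"
    by (subst borel_measurable_indicator_iff) (simp add: space_population[OF assms])
  moreover have "(\<lambda>x. max 0 (1 - real n * orthant_excess b x)) \<in> borel_measurable M" for n
    by (intro measurable_population_continuous[OF assms] continuous_intros)
  moreover have "norm (max 0 (1 - real n * orthant_excess b x)) \<le> 1" for n x
    using orthant_excess_nonneg[of b x] by simp
  ultimately have "(\<lambda>n. \<integral>x. max 0 (1 - real n * orthant_excess b x) \<partial>M)
                    \<longlonglongrightarrow> (\<integral>x. indicator {..b} x \<partial>M)"
    by (intro integral_dominated_convergence[where w = "\<lambda>_. 1"] integrable_const AE_I2
        tendsto_orthant_ramp)
  then show ?thesis
    by (simp add: space_population[OF assms])
qed

lemma measure_orthant_eq_if_convex_integrals_eq: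
  assumes "population S \<pi>" "population S \<pi>'" "S \<subseteq> traits"
    and eq: "\<And>h. convex_on traits h \<Longrightarrow> continuous_on traits h \<Longrightarrow>
               (\<integral>s. h s \<partial>\<pi>) = (\<integral>s. h s \<partial>\<pi>')"
  shows "measure \<pi> ({..b} \<inter> S) = measure \<pi>' ({..b} \<inter> S)"
proof -
  define ramp where "ramp n x = max 0 (1 - real n * orthant_excess b x)" for n :: nat and x
  define lo where "lo n x = real n * orthant_excess b x" for n :: nat and x :: "real ^ 'a"
  define hi where "hi n x = 1 + max 0 (lo n x - 1)" for n x
  have ramp: "ramp n = (\<lambda>x. hi n x - lo n x)" for n
    by (simp add: ramp_def hi_def lo_def fun_eq_iff max_def)
  have convex_lo: "convex_on traits (lo n)" for n
    unfolding lo_def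
    by (intro convex_on_cmul convex_on_subset[OF convex_on_orthant_excess subset_UNIV traits_convex])
      simp
  have convex_hi: "convex_on traits (hi n)" for n
    unfolding hi_def
    by (intro convex_on_add convex_on_max convex_on_diff)
      (simp_all add: convex_lo convex_on_const concave_on_const traits_convex)
  have continuous_hi_lo: "continuous_on traits (hi n)" "continuous_on traits (lo n)" for n
    unfolding hi_def lo_def
    by (intro continuous_intros)+
  have integrable: "integrable M (hi n)" "integrable M (lo n)" if "population S M" for M n
    using integrable_population_continuous[OF that assms(3) traits_compact continuous_hi_lo(1)]
      integrable_population_continuous[OF that assms(3) traits_compact continuous_hi_lo(2)] by auto
  have "(\<integral>x. ramp n x \<partial>\<pi>) = (\<integral>x. ramp n x \<partial>\<pi>')" for n
    unfolding ramp using eq[OF convex_hi continuous_hi_lo(1)] eq[OF convex_lo continuous_hi_lo(2)]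
      integrable[OF assms(1)] integrable[OF assms(2)] by simp
  then have "(\<lambda>n. \<integral>x. ramp n x \<partial>\<pi>) \<longlonglongrightarrow> measure \<pi>' ({..b} \<inter> S)"
    using tendsto_integral_orthant_ramp[OF assms(2)] by (simp add: ramp_def)
  with tendsto_integral_orthant_ramp[OF assms(1)] show ?thesis
    unfolding ramp_def by (rule LIMSEQ_unique)
qed

lemma population_eqI_orthants:
  fixes \<pi> \<pi>' :: "(real ^ 'a) measure"
  assumes "S \<in> sets borel" "S \<subseteq> {..u}" "population S \<pi>" "population S \<pi>'"
    and eq: "\<And>b. measure \<pi> ({..b} \<inter> S) = measure \<pi>' ({..b} \<inter> S)"
  shows "\<pi> = \<pi>'"
proof -
  define E where "E = (\<inter>) S ` range (\<lambda>b :: real ^ 'a. {..b})"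
  have "sets (borel :: (real ^ 'a) measure) = sigma_sets UNIV (range atMost)"
    by (subst borel_eq_atMost) (simp add: sets_measure_of)
  then have sets_E: "sets M = sigma_sets S E" if "population S M" for M
    unfolding sets_population[OF that] E_def using assms(1) by (simp add: sigma_sets_Int)
  interpret \<pi>: prob_space \<pi>
    using assms(3) by (simp add: population_def)
  interpret \<pi>': prob_space \<pi>'
    using assms(4) by (simp add: population_def)
  show ?thesis
  proof (rule measure_eqI_generator_eq[OF _ _ _ sets_E[OF assms(3)] sets_E[OF assms(4)],
        where A = "\<lambda>_. S"])
    show "Int_stable E"
      unfolding Int_stable_def E_def
    proof safe
      fix a b :: "real ^ 'a"
      have "S \<inter> {..a} \<inter> (S \<inter> {..b}) = S \<inter> {..inf a b}"
        by (auto simp: le_inf_iff)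
      then show "S \<inter> {..a} \<inter> (S \<inter> {..b}) \<in> (\<inter>) S ` range atMost"
        by blast
    qed
    show "E \<subseteq> Pow S"
      unfolding E_def by auto
    show "emeasure \<pi> X = emeasure \<pi>' X" if "X \<in> E" for X
      using that eq unfolding E_def
      by (auto simp: \<pi>.emeasure_eq_measure \<pi>'.emeasure_eq_measure Int_commute)
    have "S = S \<inter> {..u}"
      using assms(2) by blast
    then show "range (\<lambda>_. S) \<subseteq> E"
      unfolding E_def by blast
    show "(\<Union>i :: nat. S) = S" "emeasure \<pi> S \<noteq> \<infinity>"
      by simp_all
  qed
qed

lemma mps_antisym:
  assumes "S \<in> sets borel" "S \<subseteq> traits" "population S \<pi>" "population S \<pi>'"
    and "mps \<pi> \<pi>'" "mps \<pi>' \<pi>"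
  shows "\<pi> = \<pi>'"
proof (rule population_eqI_orthants[OF assms(1) _ assms(3,4)])
  show "S \<subseteq> {..\<chi> \<theta>. 1}"
    using assms(2) by (auto simp: less_eq_vec_def intro!: traits_component_le_1)
  show "measure \<pi> ({..b} \<inter> S) = measure \<pi>' ({..b} \<inter> S)" for b
    using assms(5,6) unfolding mps_def
    by (intro measure_orthant_eq_if_convex_integrals_eq[OF assms(3,4,2)] order.antisym) auto
qed

lemma strictly_discriminating_firm_iff_not_mps:
  assumes "population S \<pi>" "population S \<pi>'" "S \<subseteq> traits"
  shows "(\<exists>A. firm A \<and> discriminates_strictly_against A \<pi> \<pi>') \<longleftrightarrow> \<not> mps \<pi> \<pi>'"
  using mps_iff_all_firms_discriminate[OF assms(2,1,3)]
  by (auto simp: discriminates_against_def discriminates_strictly_against_def not_le)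

theorem corollary1:
  fixes S :: "(real ^ 'a::finite) set"
    and \<pi> \<pi>' :: "(real ^ 'a) measure"
  assumes "S \<in> sets borel" and "S \<subseteq> traits"
    and "population S \<pi>" and "population S \<pi>'"
    and "skill_dist \<pi> = skill_dist \<pi>'"
  shows "(systematic_discrimination \<pi> \<pi>' \<longleftrightarrow> mps \<pi>' \<pi> \<and> \<pi> \<noteq> \<pi>')
       \<and> (unsystematic_discrimination \<pi> \<pi>' \<longleftrightarrow> \<not> mps \<pi> \<pi>' \<and> \<not> mps \<pi>' \<pi>)
       \<and> (no_discrimination \<pi> \<pi>' \<longleftrightarrow> \<pi> = \<pi>')"
proof -
  have systematic: "systematic_discrimination \<sigma> \<sigma>' \<longleftrightarrow> mps \<sigma>' \<sigma> \<and> \<not> mps \<sigma> \<sigma>'"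
    if "population S \<sigma>" "population S \<sigma>'" for \<sigma> \<sigma>'
    unfolding systematic_discrimination_def
    using mps_iff_all_firms_discriminate[OF that assms(2)]
      strictly_discriminating_firm_iff_not_mps[OF that assms(2)] by blast
  have unsystematic: "unsystematic_discrimination \<pi> \<pi>' \<longleftrightarrow> \<not> mps \<pi> \<pi>' \<and> \<not> mps \<pi>' \<pi>"
    unfolding unsystematic_discrimination_def
    using strictly_discriminating_firm_iff_not_mps[OF assms(3,4,2)]
      strictly_discriminating_firm_iff_not_mps[OF assms(4,3,2)] by blast
  have equal: "\<pi> = \<pi>' \<longleftrightarrow> mps \<pi> \<pi>' \<and> mps \<pi>' \<pi>"
    using mps_antisym[OF assms(1-4)] by (auto simp: mps_def)
  show ?thesis
    unfolding no_discrimination_def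
    using systematic[OF assms(3,4)] systematic[OF assms(4,3)] unsystematic equal by blast
qed

end
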